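(* Fix a real number $0<q<1$ and $\nu\in\mathbb{S}^1$. Order the standard orthonormal basis of $L^2(\mathbb{S}^1)$ by setting $e_{2n}:=e^{-in\theta}$ for $n\geq 0$ and $e_{2n-1}:=e^{in\theta}$ for $n\geq 1$, and put $e_{-1}:=0$. Define $\sigma_{c,\nu},\sigma_{a,\nu}:\mathbb{S}^1\times\mathbb{Z}\to\mathbb{C}$ by $\sigma_{c,\nu}(\theta,n)=q^{-2n}\nu$ for $n\leq 0$ and $\sigma_{c,\nu}(\theta,n)=q^{2n-1}\nu$ for $n\geq 1$; $\sigma_{a,\nu}(\theta,0)=0$, $\sigma_{a,\nu}(\theta,n)=\sqrt{1-q^{2(2n-1)}}\,e^{-(2n-1)i\theta}$ for $n\geq 1$, and $\sigma_{a,\nu}(\theta,n)=\sqrt{1-q^{2(-2n)}}\,e^{-2ni\theta}$ for $n\leq -1$. Let $T_{c,\nu}$ and $T_{a,\nu}$ be the periodic pseudo-differential operators $T_{\sigma}f(\theta)=\sum_{n\in\mathbb{Z}}\hat f(n)\sigma(\theta,n)e^{in\theta}$ with symbols $\sigma=\sigma_{c,\nu}$ and $\sigma=\sigma_{a,\nu}$ respectively. Then for every $k\geq 0$, $$T_{c,\nu}e_k=q^{k}\nu\, e_k,\qquad T_{a,\nu}e_k=\sqrt{1-q^{2k}}\,e_{k-1},$$ i.e. $T_{a,\nu}$ and $T_{c,\nu}$ act on the basis $(e_k)_{k\ge0}$ exactly as $\pi^\infty_\nu(a)$ and $\pi^\infty_\nu(c)$ in Woronowicz's infinite-dimensional representation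 $\pi^\infty_\nu(a)e_k=\sqrt{1-q^{2k}}e_{k-1}$, $\pi^\infty_\nu(c)e_k=q^k\nu e_k$ of $SU_q(2)$.
   Context: For $f\in L^1(\mathbb{S}^1)$, $\hat f(n)=\frac{1}{2\pi}\int_0^{2\pi}f(\theta)e^{-in\theta}\,d\theta$ denotes its $n$-th Fourier coefficient. $SU_q(2)$ is the $*$-algebra generated by $a,c$ subject to $ac^*=qc^*a$, $ca^*=qa^*c$, $c^*a^*=qa^*c^*$, $c^*c=cc^*$, $aa^*+q^2c^*c=a^*a+c^*c=1$. *)

theory Defs
  imports "HOL-Analysis.Analysis"
begin

text \<open>Functions on the circle are represented as functions of the angle
  theta (real), i.e. 2pi-periodic functions real => complex.\<close>

definition fourier_coeff :: "(real \<Rightarrow> complex) \<Rightarrow> int \<Rightarrow> complex" where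
  "fourier_coeff f n =
     integral {0..2*pi} (\<lambda>\<theta>. f \<theta> * exp (- \<i> * of_int n * of_real \<theta>)) / of_real (2*pi)"

definition pseudo_diff_op ::
    "(real \<Rightarrow> int \<Rightarrow> complex) \<Rightarrow> (real \<Rightarrow> complex) \<Rightarrow> real \<Rightarrow> complex" where
  "pseudo_diff_op \<sigma> f \<theta> =
     (\<Sum>\<^sub>\<infinity>n\<in>(UNIV::int set). fourier_coeff f n * \<sigma> \<theta> n * exp (\<i> * of_int n * of_real \<theta>))"

text \<open>Ordered basis: e_(2n) = exp(-i n theta), e_(2n-1) = exp(i n theta), e_(-1) = 0
  (all negative indices give 0; only e_(-1) is used).\<close>
definition basis_e :: "int \<Rightarrow> real \<Rightarrow> complex" where
  "basis_e k \<theta> =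
     (if k < 0 then 0
      else if even k then exp (- \<i> * of_int (k div 2) * of_real \<theta>)
      else exp (\<i> * of_int ((k + 1) div 2) * of_real \<theta>))"

definition sigma_c :: "real \<Rightarrow> complex \<Rightarrow> real \<Rightarrow> int \<Rightarrow> complex" where
  "sigma_c q \<nu> \<theta> n =
     (if n \<le> 0 then of_real (q powr of_int (-2*n)) * \<nu>
      else of_real (q powr of_int (2*n - 1)) * \<nu>)"

definition sigma_a :: "real \<Rightarrow> complex \<Rightarrow> real \<Rightarrow> int \<Rightarrow> complex" where
  "sigma_a q \<nu> \<theta> n =
     (if n = 0 then 0
      else if n \<ge> 1 then
        of_real (sqrt (1 - q powr of_int (2*(2*n - 1)))) * exp (- of_int (2*n - 1) * \<i> * of_real \<theta>)
      else
        of_real (sqrt (1 - q powr of_int (2*(-2*n)))) * exp (- of_int (2*n) * \<i> * of_real \<theta>))"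

end

theory Submission imports Defs begin

text \<open>Every basis vector e_k is a character exp(i n_k theta). By orthogonality of the characters
  its Fourier transform is the Kronecker delta at n_k, so T_sigma e_k = sigma(theta, n_k) e_k;
  the symbols are built so that sigma_c(theta, n_k) = q^k nu and
  sigma_a(theta, n_k) exp(i n_k theta) = sqrt(1 - q^(2k)) e_(k-1).\<close>

lemma integral_exp_int_multiple:
  fixes j :: int
  shows "integral {0..2*pi} (\<lambda>\<theta>. exp (\<i> * of_int j * of_real \<theta>))
           = (if j = 0 then of_real (2*pi) else 0)"
proof (cases "j = 0")
  case True
  then show ?thesis by (simp add: scaleR_conv_of_real)
next
  case False
  let ?F = "\<lambda>\<theta>::real. exp (\<i> * of_int j * of_real \<theta>) / (\<i> * of_int j)"
  have deriv: "(?F has_vector_derivative exp (\<i> * of_int j * of_real x)) (at x within {0..2*pi})"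
    for x :: real
  proof -
    have "((\<lambda>\<theta>::real. exp (\<i> * of_int j * of_real \<theta>)) has_vector_derivative
            exp (\<i> * of_int j * of_real x) * (\<i> * of_int j)) (at x within {0..2*pi})"
      by (rule has_vector_derivative_real_field) (auto intro!: derivative_eq_intros)
    then have "(?F has_vector_derivative
                 exp (\<i> * of_int j * of_real x) * (\<i> * of_int j) / (\<i> * of_int j)) (at x within {0..2*pi})"
      by (rule has_vector_derivative_divide)
    then show ?thesis using False by simp
  qed
  have "((\<lambda>\<theta>. exp (\<i> * of_int j * of_real \<theta>)) has_integral (?F (2*pi) - ?F 0)) {0..2*pi}"
    by (rule fundamental_theorem_of_calculus) (use deriv in auto)
  moreover have "exp (\<i> * of_int j * of_real (2*pi)) = 1"
  proof -
    have "\<i> * of_int j * of_real (2*pi) = 2 * pi * of_int j * \<i>" by (simp add: algebra_simps)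
    then show ?thesis by (simp add: exp_eq_1)
  qed
  ultimately show ?thesis using False by (simp add: integral_unique)
qed

lemma fourier_coeff_exp:
  fixes m n :: int
  shows "fourier_coeff (\<lambda>\<theta>. exp (\<i> * of_int m * of_real \<theta>)) n = (if n = m then 1 else 0)"
proof -
  have "(\<lambda>\<theta>::real. exp (\<i> * of_int m * of_real \<theta>) * exp (- \<i> * of_int n * of_real \<theta>))
      = (\<lambda>\<theta>. exp (\<i> * of_int (m - n) * of_real \<theta>))"
    by (rule ext) (simp add: exp_add [symmetric] algebra_simps)
  then show ?thesis
    unfolding fourier_coeff_def using integral_exp_int_multiple [of "m - n"] by auto
qed

lemma pseudo_diff_op_exp:
  "pseudo_diff_op \<sigma> (\<lambda>\<theta>. exp (\<i> * of_int m * of_real \<theta>))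
     = (\<lambda>\<theta>. \<sigma> \<theta> m * exp (\<i> * of_int m * of_real \<theta>))"
proof
  fix \<theta>
  have "pseudo_diff_op \<sigma> (\<lambda>\<theta>. exp (\<i> * of_int m * of_real \<theta>)) \<theta>
      = (\<Sum>\<^sub>\<infinity>n\<in>{m}. (if n = m then 1 else 0) * \<sigma> \<theta> n * exp (\<i> * of_int n * of_real \<theta>))"
    unfolding pseudo_diff_op_def fourier_coeff_exp by (rule infsum_cong_neutral) auto
  then show "pseudo_diff_op \<sigma> (\<lambda>\<theta>. exp (\<i> * of_int m * of_real \<theta>)) \<theta>
      = \<sigma> \<theta> m * exp (\<i> * of_int m * of_real \<theta>)"
    by simp
qed

definition basis_freq :: "nat \<Rightarrow> int" where
  "basis_freq k = (if even k then - int (k div 2) else int (k div 2) + 1)"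

lemma basis_e_of_nat: "basis_e (int k) = (\<lambda>\<theta>. exp (\<i> * of_int (basis_freq k) * of_real \<theta>))"
proof (cases "even k")
  case True
  then obtain m where "k = 2*m" by blast
  then show ?thesis by (simp add: basis_e_def basis_freq_def fun_eq_iff)
next
  case False
  then obtain m where "k = 2*m + 1" using oddE by blast
  then show ?thesis by (simp add: basis_e_def basis_freq_def fun_eq_iff ac_simps)
qed

lemma powr_of_nat: "0 < (q::real) \<Longrightarrow> q powr of_int (int n) = q ^ n"
  using powr_realpow [of q n] by simp

lemma sigma_c_basis_freq:
  assumes "0 < q"
  shows "sigma_c q \<nu> \<theta> (basis_freq k) = of_real (q ^ k) * \<nu>"
proof (cases "even k")
  case True
  then obtain m where "k = 2*m" by blast
  then show ?thesis
    using powr_of_nat [OF assms, of k] by (simp add: sigma_c_def basis_freq_def)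
next
  case False
  then obtain m where "k = 2*m + 1" using oddE by blast
  then show ?thesis
    using powr_of_nat [OF assms, of k] by (simp add: sigma_c_def basis_freq_def)
qed

lemma sigma_a_basis_freq:
  assumes "0 < q"
  shows "sigma_a q \<nu> \<theta> (basis_freq k) * exp (\<i> * of_int (basis_freq k) * of_real \<theta>)
           = of_real (sqrt (1 - q ^ (2*k))) * basis_e (int k - 1) \<theta>"
proof (cases "even k")
  case True
  then obtain m where k: "k = 2*m" by blast
  show ?thesis
  proof (cases "m = 0")
    case True
    then show ?thesis by (simp add: sigma_a_def basis_freq_def k)
  next
    case False
    have "exp (- of_int (2 * - int m) * \<i> * of_real \<theta>) * exp (\<i> * of_int (- int m) * of_real \<theta>)
        = exp (\<i> * of_int (int m) * of_real \<theta>)"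
      by (simp add: exp_add [symmetric] algebra_simps)
    moreover have "basis_e (int k - 1) \<theta> = exp (\<i> * of_int (int m) * of_real \<theta>)"
      using k False by (simp add: basis_e_def)
    ultimately show ?thesis
      using False powr_of_nat [OF assms, of "2*k"]
      by (simp add: sigma_a_def basis_freq_def k mult.assoc)
  qed
next
  case False
  then obtain m where k: "k = 2*m + 1" using oddE by blast
  have "exp (- of_int (2 * (int m + 1) - 1) * \<i> * of_real \<theta>) * exp (\<i> * of_int (int m + 1) * of_real \<theta>)
      = exp (- \<i> * of_int (int m) * of_real \<theta>)"
    by (simp add: exp_add [symmetric] algebra_simps)
  moreover have "basis_e (int k - 1) \<theta> = exp (- \<i> * of_int (int m) * of_real \<theta>)"
    using k by (simp add: basis_e_def)
  ultimately show ?thesis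
    using powr_of_nat [OF assms, of "2*k"]
    by (simp add: sigma_a_def basis_freq_def k mult.assoc)
qed

theorem mainTheorem1:
  fixes q :: real and \<nu> :: complex and k :: nat
  assumes "0 < q" and "q < 1" and "cmod \<nu> = 1"
  shows "pseudo_diff_op (sigma_c q \<nu>) (basis_e (int k))
           = (\<lambda>\<theta>. of_real (q ^ k) * \<nu> * basis_e (int k) \<theta>)
       \<and> pseudo_diff_op (sigma_a q \<nu>) (basis_e (int k))
           = (\<lambda>\<theta>. of_real (sqrt (1 - q ^ (2*k))) * basis_e (int k - 1) \<theta>)"
  unfolding basis_e_of_nat pseudo_diff_op_exp
  by (simp add: sigma_c_basis_freq sigma_a_basis_freq assms(1) flip: basis_e_of_nat)

end
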